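(* Let $\mathcal X,\hat{\mathcal X}$ be finite alphabets, $\{p_\theta\}_{\theta\in\Theta}$ a nonempty family of probability distributions on $\mathcal X$, and $d:\mathcal X\times\hat{\mathcal X}\to[0,\infty)$ a distortion measure. Then the rate distortion function $\hat R^I(D)$ satisfies: (1) $\hat R^I(D)$ is non-increasing in $D$; (2) $\hat R^I(D)$ is a convex function on $[0,+\infty)$.
   Context: For a transition probability matrix $\boldsymbol Q=(q(\hat x|x))$ from $\mathcal X$ to $\hat{\mathcal X}$: maximum expected distortion $\mathbb E_{\boldsymbol Q}[d(X,\hat X)]=\sup_{\theta\in\Theta}\sum_{x,\hat x}p_\theta(x)q(\hat x|x)d(x,\hat x)$; nonlinear mutual information $\overline I[\{p_\theta\}_{\theta\in\Theta};\boldsymbol Q]=\sup_{\theta\in\Theta}\sum_{x,\hat x}p_\theta(x)q(\hat x|x)\log\frac{q(\hat x|x)}{\sum_{x'}q(\hat x|x')p_\theta(x')}$. Rate distortion function: $\hat R^I(D)=\inf\{\overline I[\{p_\theta\};\boldsymbol Q]:\ \boldsymbol Q\text{ with }\mathbb E_{\boldsymbol Q}[d(X,\hat X)]\le D\}$ (infimum of the empty set is $+\infty$). *)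

theory Defs
  imports "HOL-Analysis.Analysis" "HOL-Library.Extended_Real"
begin

definition is_distribution :: "('x::finite \<Rightarrow> real) \<Rightarrow> bool" where
  "is_distribution p \<longleftrightarrow> (\<forall>x. 0 \<le> p x) \<and> (\<Sum>x\<in>UNIV. p x) = 1"

definition is_transition_matrix :: "('x::finite \<Rightarrow> 'y::finite \<Rightarrow> real) \<Rightarrow> bool" where
  "is_transition_matrix Q \<longleftrightarrow> (\<forall>x y. 0 \<le> Q x y) \<and> (\<forall>x. (\<Sum>y\<in>UNIV. Q x y) = 1)"

definition max_exp_distortion ::
  "('t \<Rightarrow> 'x::finite \<Rightarrow> real) \<Rightarrow> 't set \<Rightarrow> ('x \<Rightarrow> 'y::finite \<Rightarrow> real)
     \<Rightarrow> ('x \<Rightarrow> 'y \<Rightarrow> real) \<Rightarrow> ereal" where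
  "max_exp_distortion p \<Theta> d Q =
     (SUP \<theta>\<in>\<Theta>. ereal (\<Sum>x\<in>UNIV. \<Sum>y\<in>UNIV. p \<theta> x * Q x y * d x y))"

definition nonlinear_MI ::
  "('t \<Rightarrow> 'x::finite \<Rightarrow> real) \<Rightarrow> 't set \<Rightarrow> ('x \<Rightarrow> 'y::finite \<Rightarrow> real) \<Rightarrow> ereal" where
  "nonlinear_MI p \<Theta> Q =
     (SUP \<theta>\<in>\<Theta>. ereal (\<Sum>x\<in>UNIV. \<Sum>y\<in>UNIV.
        (if p \<theta> x * Q x y = 0 then 0
         else p \<theta> x * Q x y * ln (Q x y / (\<Sum>x'\<in>UNIV. Q x' y * p \<theta> x')))))"

text \<open>Rate distortion function; INF of the empty set is \<top> = +\<infinity> in ereal.\<close>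
definition rate_distortion ::
  "('t \<Rightarrow> 'x::finite \<Rightarrow> real) \<Rightarrow> 't set \<Rightarrow> ('x \<Rightarrow> 'y::finite \<Rightarrow> real) \<Rightarrow> real \<Rightarrow> ereal" where
  "rate_distortion p \<Theta> d D =
     (INF Q\<in>{Q. is_transition_matrix Q \<and> max_exp_distortion p \<Theta> d Q \<le> ereal D}.
        nonlinear_MI p \<Theta> Q)"

end

theory Submission
  imports Defs
begin

text \<open>For a fixed input distribution \<open>p\<close>, the mutual information
  \<open>\<Sum>x y. rel_entr (p x Q x y) (p x q y)\<close>, with \<open>q\<close> the output distribution, is convex in the
  channel \<open>Q\<close>: \<open>q\<close> depends linearly on \<open>Q\<close> and \<open>rel_entr\<close> is jointly convex. Suprema over
  \<open>\<theta>\<close> preserve convexity, and the maximum expected distortion is a supremum of linear functions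
  of \<open>Q\<close>. So mixing channels feasible for \<open>D1\<close> and \<open>D2\<close> gives a channel feasible for the
  mixed distortion whose rate is at most the mixed rate; as all rates are nonnegative, the
  infima over the two feasible sets split. Monotonicity holds because feasible sets grow
  with \<open>D\<close>.\<close>

lemma ereal_mult_INF:
  fixes f :: "'a \<Rightarrow> ereal"
  assumes "0 < c"
  shows "ereal c * (INF i\<in>I. f i) = (INF i\<in>I. ereal c * f i)"
proof -
  have "bij ((*) (ereal c))"
    using assms by (intro bij_betw_byWitness[of _ "\<lambda>x. x / ereal c"])
      (auto simp: ereal_mult_divide ereal_divide_eq)
  moreover have "mono ((*) (ereal c))"
    using assms by (auto simp: mono_def ereal_mult_left_mono)
  ultimately show ?thesis
    by (simp add: mono_bij_Inf image_comp)
qed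

lemma ereal_le_INF_add:
  fixes f g :: "'a \<Rightarrow> ereal"
  assumes "\<And>a. a \<in> A \<Longrightarrow> 0 \<le> f a" "\<And>b. b \<in> B \<Longrightarrow> 0 \<le> g b"
    and "\<And>a b. a \<in> A \<Longrightarrow> b \<in> B \<Longrightarrow> L \<le> f a + g b"
  shows "L \<le> (INF a\<in>A. f a) + (INF b\<in>B. g b)"
proof -
  have nonneg: "0 \<le> (INF a\<in>A. f a)" "0 \<le> (INF b\<in>B. g b)"
    using assms(1,2) by (auto intro: INF_greatest)
  show ?thesis
  proof (cases "A = {} \<or> B = {}")
    case True
    then show ?thesis using nonneg by (auto simp: top_ereal_def)
  next
    case False
    have "L \<le> (INF b\<in>B. (INF a\<in>A. f a) + g b)"
    proof (rule INF_greatest)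
      fix b assume "b \<in> B"
      then have "L \<le> (INF a\<in>A. f a + g b)"
        using assms(3) by (auto intro: INF_greatest)
      also have "\<dots> = (INF a\<in>A. f a) + g b"
        using False assms(1,2) \<open>b \<in> B\<close> by (intro INF_ereal_add_left) auto
      finally show "L \<le> (INF a\<in>A. f a) + g b" .
    qed
    also have "\<dots> = (INF a\<in>A. f a) + (INF b\<in>B. g b)"
      using False assms(2) nonneg by (intro INF_ereal_add_right) auto
    finally show ?thesis .
  qed
qed

lemma SUP_ereal_le_convex_comb:
  assumes "\<And>i. i \<in> I \<Longrightarrow> f i \<le> t * g i + (1 - t) * h i" "0 \<le> t" "t \<le> 1"
  shows "(SUP i\<in>I. ereal (f i))
           \<le> ereal t * (SUP i\<in>I. ereal (g i)) + ereal (1 - t) * (SUP i\<in>I. ereal (h i))"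
proof (rule SUP_least)
  fix i assume "i \<in> I"
  then have "ereal (f i) \<le> ereal t * ereal (g i) + ereal (1 - t) * ereal (h i)"
    using assms(1) by simp
  also have "\<dots> \<le> ereal t * (SUP i\<in>I. ereal (g i)) + ereal (1 - t) * (SUP i\<in>I. ereal (h i))"
    using \<open>i \<in> I\<close> assms(2,3) by (intro add_mono ereal_mult_left_mono SUP_upper) auto
  finally show "ereal (f i) \<le> \<dots>" .
qed

definition rel_entr :: "real \<Rightarrow> real \<Rightarrow> real" where
  "rel_entr a b = (if a = 0 then 0 else a * ln (a / b))"

text \<open>For \<open>a, b \<ge> 0\<close> with \<open>b > 0\<close> whenever \<open>a > 0\<close>, \<open>rel_entr a b\<close> is the supremum over
  \<open>r > 0\<close> of \<open>a ln r + a - b r\<close>, which is linear in \<open>(a, b)\<close> (for \<open>a > 0\<close> attained at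
  \<open>r = a / b\<close>); this makes \<open>rel_entr\<close> jointly convex.\<close>

lemma rel_entr_ge_linear:
  assumes "0 \<le> a" "0 \<le> b" "0 < a \<Longrightarrow> 0 < b" "0 < r"
  shows "a * ln r + a - b * r \<le> rel_entr a b"
proof (cases "a = 0")
  case True
  then show ?thesis using assms by (simp add: rel_entr_def)
next
  case False
  then have a: "0 < a" and b: "0 < b" using assms by auto
  define z where "z = r * b / a"
  have z: "0 < z" using a b \<open>0 < r\<close> by (simp add: z_def)
  have "a * (ln r - ln (a / b)) = a * ln z"
    using a b \<open>0 < r\<close> by (simp add: z_def ln_div ln_mult)
  also have "\<dots> \<le> a * (z - 1)"
    using a z by (intro mult_left_mono ln_le_minus_one) auto
  also have "\<dots> = b * r - a"
    using a by (simp add: z_def field_simps)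
  finally show ?thesis using False by (simp add: rel_entr_def algebra_simps)
qed

lemma rel_entr_ge_diff:
  assumes "0 \<le> a" "0 \<le> b" "0 < a \<Longrightarrow> 0 < b"
  shows "a - b \<le> rel_entr a b"
  using rel_entr_ge_linear[OF assms, of 1] by simp

lemma rel_entr_convex:
  assumes "0 \<le> a1" "0 \<le> b1" "0 < a1 \<Longrightarrow> 0 < b1"
    and "0 \<le> a2" "0 \<le> b2" "0 < a2 \<Longrightarrow> 0 < b2"
    and "0 \<le> t" "t \<le> 1"
  shows "rel_entr (t * a1 + (1 - t) * a2) (t * b1 + (1 - t) * b2)
           \<le> t * rel_entr a1 b1 + (1 - t) * rel_entr a2 b2"
proof -
  define a b where "a = t * a1 + (1 - t) * a2" and "b = t * b1 + (1 - t) * b2"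
  have "0 \<le> t * a1" "0 \<le> (1 - t) * a2" "0 \<le> t * b1" "0 \<le> (1 - t) * b2"
    using assms by simp_all
  show ?thesis
  proof (cases "a = 0")
    case True
    then have "t * a1 = 0" "(1 - t) * a2 = 0"
      using \<open>0 \<le> t * a1\<close> \<open>0 \<le> (1 - t) * a2\<close> by (simp_all add: a_def add_nonneg_eq_0_iff)
    then show ?thesis using True by (auto simp: a_def rel_entr_def)
  next
    case False
    then have a: "0 < a" using \<open>0 \<le> t * a1\<close> \<open>0 \<le> (1 - t) * a2\<close> by (simp add: a_def)
    have b: "0 < b"
    proof (cases "0 < t * a1")
      case True
      then have "0 < t * b1" using assms by (simp add: zero_less_mult_iff)
      then show ?thesis using \<open>0 \<le> (1 - t) * b2\<close> by (simp add: b_def)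
    next
      case False
      then have "0 < (1 - t) * a2" using a \<open>0 \<le> t * a1\<close> unfolding a_def by linarith
      then have "0 < (1 - t) * b2" using assms by (simp add: zero_less_mult_iff)
      then show ?thesis using \<open>0 \<le> t * b1\<close> by (simp add: b_def)
    qed
    define r where "r = a / b"
    have r: "0 < r" using a b by (simp add: r_def)
    have "rel_entr a b = a * ln r + a - b * r"
      using a b by (simp add: rel_entr_def r_def)
    also have "\<dots> = t * (a1 * ln r + a1 - b1 * r) + (1 - t) * (a2 * ln r + a2 - b2 * r)"
      by (simp add: a_def b_def algebra_simps)
    also have "\<dots> \<le> t * rel_entr a1 b1 + (1 - t) * rel_entr a2 b2"
      using assms r by (intro add_mono mult_left_mono rel_entr_ge_linear) auto
    finally show ?thesis by (simp add: a_def b_def)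
  qed
qed

definition channel_output :: "('x::finite \<Rightarrow> real) \<Rightarrow> ('x \<Rightarrow> 'y::finite \<Rightarrow> real) \<Rightarrow> 'y \<Rightarrow> real" where
  "channel_output p Q y = (\<Sum>x\<in>UNIV. Q x y * p x)"

definition mutual_information :: "('x::finite \<Rightarrow> real) \<Rightarrow> ('x \<Rightarrow> 'y::finite \<Rightarrow> real) \<Rightarrow> real" where
  "mutual_information p Q =
     (\<Sum>x\<in>UNIV. \<Sum>y\<in>UNIV. rel_entr (p x * Q x y) (p x * channel_output p Q y))"

lemma nonlinear_MI_eq_SUP_mutual_information:
  "nonlinear_MI p \<Theta> Q = (SUP \<theta>\<in>\<Theta>. ereal (mutual_information (p \<theta>) Q))"
  unfolding nonlinear_MI_def mutual_information_def rel_entr_def channel_output_def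
  by (intro SUP_cong refl arg_cong[where f = ereal] sum.cong) (auto simp: field_simps)

lemma channel_output_distribution:
  assumes "is_distribution p" "is_transition_matrix Q"
  shows "is_distribution (channel_output p Q)"
proof -
  have "(\<Sum>y\<in>UNIV. channel_output p Q y) = (\<Sum>x\<in>UNIV. p x * (\<Sum>y\<in>UNIV. Q x y))"
    unfolding channel_output_def by (subst sum.swap) (simp add: sum_distrib_left mult.commute)
  then show ?thesis
    using assms unfolding is_distribution_def is_transition_matrix_def
    by (simp add: channel_output_def sum_nonneg)
qed

lemma rel_entr_args_joint_output:
  assumes "is_distribution p" "is_transition_matrix Q"
  shows "0 \<le> p x * Q x y" "0 \<le> p x * channel_output p Q y"
    and "0 < p x * Q x y \<Longrightarrow> 0 < p x * channel_output p Q y"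
proof -
  have p: "0 \<le> p x'" and Q: "0 \<le> Q x' y" for x'
    using assms by (auto simp: is_distribution_def is_transition_matrix_def)
  show "0 \<le> p x * Q x y" "0 \<le> p x * channel_output p Q y"
    using p Q channel_output_distribution[OF assms] by (simp_all add: is_distribution_def)
  assume pos: "0 < p x * Q x y"
  have "Q x y * p x \<le> channel_output p Q y"
    unfolding channel_output_def using p Q by (intro member_le_sum) auto
  then have "0 < channel_output p Q y"
    using pos by (simp add: mult.commute)
  moreover have "0 < p x"
    using pos p[of x] Q[of x] by (simp add: zero_less_mult_iff)
  ultimately show "0 < p x * channel_output p Q y" by simp
qed

text \<open>Gibbs' inequality, from \<open>rel_entr a b \<ge> a - b\<close>: the joint distribution \<open>p x Q x y\<close> and
  the product \<open>p x q y\<close> both have total mass 1.\<close>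

lemma mutual_information_nonneg:
  assumes "is_distribution p" "is_transition_matrix Q"
  shows "0 \<le> mutual_information p Q"
proof -
  have "(\<Sum>x\<in>UNIV. \<Sum>y\<in>UNIV. p x * Q x y) = 1"
    using assms by (simp add: is_distribution_def is_transition_matrix_def flip: sum_distrib_left)
  moreover have "(\<Sum>x\<in>UNIV. \<Sum>y\<in>UNIV. p x * channel_output p Q y) = 1"
    using assms channel_output_distribution[OF assms]
    by (simp add: is_distribution_def flip: sum_distrib_left sum_distrib_right)
  ultimately have "0 = (\<Sum>x\<in>UNIV. \<Sum>y\<in>UNIV. p x * Q x y - p x * channel_output p Q y)"
    by (simp add: sum_subtractf)
  also have "\<dots> \<le> mutual_information p Q"
    unfolding mutual_information_def
    by (intro sum_mono rel_entr_ge_diff rel_entr_args_joint_output[OF assms])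
  finally show ?thesis .
qed

lemma mutual_information_convex:
  assumes p: "is_distribution p" and Q1: "is_transition_matrix Q1" and Q2: "is_transition_matrix Q2"
    and "0 \<le> t" "t \<le> 1"
  shows "mutual_information p (\<lambda>x y. t * Q1 x y + (1 - t) * Q2 x y)
           \<le> t * mutual_information p Q1 + (1 - t) * mutual_information p Q2"
proof -
  have mix_output: "channel_output p (\<lambda>x y. t * Q1 x y + (1 - t) * Q2 x y) y
          = t * channel_output p Q1 y + (1 - t) * channel_output p Q2 y" for y
    unfolding channel_output_def by (simp add: distrib_right sum.distrib sum_distrib_left mult.assoc)
  have "mutual_information p (\<lambda>x y. t * Q1 x y + (1 - t) * Q2 x y) =
     (\<Sum>x\<in>UNIV. \<Sum>y\<in>UNIV.
        rel_entr (t * (p x * Q1 x y) + (1 - t) * (p x * Q2 x y))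
          (t * (p x * channel_output p Q1 y) + (1 - t) * (p x * channel_output p Q2 y)))"
    unfolding mutual_information_def mix_output
    by (intro sum.cong refl arg_cong2[where f = rel_entr]) (simp_all add: algebra_simps)
  also have "\<dots> \<le> (\<Sum>x\<in>UNIV. \<Sum>y\<in>UNIV.
        t * rel_entr (p x * Q1 x y) (p x * channel_output p Q1 y)
        + (1 - t) * rel_entr (p x * Q2 x y) (p x * channel_output p Q2 y))"
    using assms
    by (intro sum_mono rel_entr_convex rel_entr_args_joint_output[OF p Q1]
        rel_entr_args_joint_output[OF p Q2])
  also have "\<dots> = t * mutual_information p Q1 + (1 - t) * mutual_information p Q2"
    unfolding mutual_information_def by (simp add: sum.distrib sum_distrib_left)
  finally show ?thesis .
qed

lemma nonlinear_MI_nonneg: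
  assumes "\<Theta> \<noteq> {}" "\<And>\<theta>. \<theta> \<in> \<Theta> \<Longrightarrow> is_distribution (p \<theta>)" "is_transition_matrix Q"
  shows "0 \<le> nonlinear_MI p \<Theta> Q"
proof -
  obtain \<theta> where "\<theta> \<in> \<Theta>" using assms(1) by blast
  then have "ereal 0 \<le> ereal (mutual_information (p \<theta>) Q)"
    using assms(2,3) by (simp add: mutual_information_nonneg)
  also have "\<dots> \<le> nonlinear_MI p \<Theta> Q"
    unfolding nonlinear_MI_eq_SUP_mutual_information using \<open>\<theta> \<in> \<Theta>\<close> by (rule SUP_upper)
  finally show ?thesis by (simp add: zero_ereal_def)
qed

lemma nonlinear_MI_convex:
  assumes "\<And>\<theta>. \<theta> \<in> \<Theta> \<Longrightarrow> is_distribution (p \<theta>)"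
    and "is_transition_matrix Q1" "is_transition_matrix Q2" "0 \<le> t" "t \<le> 1"
  shows "nonlinear_MI p \<Theta> (\<lambda>x y. t * Q1 x y + (1 - t) * Q2 x y)
           \<le> ereal t * nonlinear_MI p \<Theta> Q1 + ereal (1 - t) * nonlinear_MI p \<Theta> Q2"
  unfolding nonlinear_MI_eq_SUP_mutual_information
  using assms by (intro SUP_ereal_le_convex_comb mutual_information_convex) auto

lemma max_exp_distortion_convex:
  assumes "0 \<le> t" "t \<le> 1"
  shows "max_exp_distortion p \<Theta> d (\<lambda>x y. t * Q1 x y + (1 - t) * Q2 x y)
           \<le> ereal t * max_exp_distortion p \<Theta> d Q1 + ereal (1 - t) * max_exp_distortion p \<Theta> d Q2"
  unfolding max_exp_distortion_def
proof (rule SUP_ereal_le_convex_comb[OF _ assms])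
  fix \<theta>
  have "p \<theta> x * (t * Q1 x y + (1 - t) * Q2 x y) * d x y
          = t * (p \<theta> x * Q1 x y * d x y) + (1 - t) * (p \<theta> x * Q2 x y * d x y)" for x y
    by (simp add: algebra_simps)
  then show "(\<Sum>x\<in>UNIV. \<Sum>y\<in>UNIV. p \<theta> x * (t * Q1 x y + (1 - t) * Q2 x y) * d x y)
      \<le> t * (\<Sum>x\<in>UNIV. \<Sum>y\<in>UNIV. p \<theta> x * Q1 x y * d x y)
        + (1 - t) * (\<Sum>x\<in>UNIV. \<Sum>y\<in>UNIV. p \<theta> x * Q2 x y * d x y)"
    by (simp add: sum.distrib sum_distrib_left)
qed

lemma is_transition_matrix_convex_comb:
  assumes "is_transition_matrix Q1" "is_transition_matrix Q2" "0 \<le> t" "t \<le> 1"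
  shows "is_transition_matrix (\<lambda>x y. t * Q1 x y + (1 - t) * Q2 x y)"
  using assms by (auto simp: is_transition_matrix_def sum.distrib simp flip: sum_distrib_left)

definition distortion_feasible ::
  "('t \<Rightarrow> 'x::finite \<Rightarrow> real) \<Rightarrow> 't set \<Rightarrow> ('x \<Rightarrow> 'y::finite \<Rightarrow> real) \<Rightarrow> real
     \<Rightarrow> ('x \<Rightarrow> 'y \<Rightarrow> real) set" where
  "distortion_feasible p \<Theta> d D =
     {Q. is_transition_matrix Q \<and> max_exp_distortion p \<Theta> d Q \<le> ereal D}"

lemma rate_distortion_eq_INF_feasible:
  "rate_distortion p \<Theta> d D = (INF Q\<in>distortion_feasible p \<Theta> d D. nonlinear_MI p \<Theta> Q)"
  by (simp add: rate_distortion_def distortion_feasible_def)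

lemma distortion_feasible_mono:
  "D1 \<le> D2 \<Longrightarrow> distortion_feasible p \<Theta> d D1 \<subseteq> distortion_feasible p \<Theta> d D2"
  by (auto simp: distortion_feasible_def intro: order_trans)

lemma distortion_feasible_convex_comb:
  assumes "Q1 \<in> distortion_feasible p \<Theta> d D1" "Q2 \<in> distortion_feasible p \<Theta> d D2"
    and "0 \<le> t" "t \<le> 1"
  shows "(\<lambda>x y. t * Q1 x y + (1 - t) * Q2 x y) \<in> distortion_feasible p \<Theta> d (t * D1 + (1 - t) * D2)"
proof -
  have "max_exp_distortion p \<Theta> d (\<lambda>x y. t * Q1 x y + (1 - t) * Q2 x y)
          \<le> ereal t * max_exp_distortion p \<Theta> d Q1 + ereal (1 - t) * max_exp_distortion p \<Theta> d Q2"
    using assms(3,4) by (rule max_exp_distortion_convex)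
  also have "\<dots> \<le> ereal t * ereal D1 + ereal (1 - t) * ereal D2"
    using assms by (intro add_mono ereal_mult_left_mono) (auto simp: distortion_feasible_def)
  finally show ?thesis
    using assms by (simp add: distortion_feasible_def is_transition_matrix_convex_comb)
qed

lemma rate_distortion_antimono:
  "D1 \<le> D2 \<Longrightarrow> rate_distortion p \<Theta> d D2 \<le> rate_distortion p \<Theta> d D1"
  unfolding rate_distortion_eq_INF_feasible by (intro INF_superset_mono distortion_feasible_mono) simp_all

lemma rate_distortion_convex:
  assumes "\<Theta> \<noteq> {}" "\<And>\<theta>. \<theta> \<in> \<Theta> \<Longrightarrow> is_distribution (p \<theta>)" "0 \<le> t" "t \<le> 1"
  shows "rate_distortion p \<Theta> d (t * D1 + (1 - t) * D2)
           \<le> ereal t * rate_distortion p \<Theta> d D1 + ereal (1 - t) * rate_distortion p \<Theta> d D2"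
proof -
  consider "t = 0" | "t = 1" | "0 < t" "t < 1" using assms(3,4) by linarith
  then show ?thesis
  proof cases
    \<comment> \<open>The endpoints hold as \<open>0 * \<infinity> = 0\<close> in \<open>ereal\<close>; only a positive factor commutes
      with an infimum that may be \<open>\<infinity>\<close>.\<close>
    case 1
    then show ?thesis by (simp flip: zero_ereal_def)
  next
    case 2
    then show ?thesis by (simp flip: zero_ereal_def one_ereal_def)
  next
    case 3
    let ?F = "distortion_feasible p \<Theta> d" and ?R = "rate_distortion p \<Theta> d"
    have "?R (t * D1 + (1 - t) * D2)
            \<le> (INF Q1\<in>?F D1. ereal t * nonlinear_MI p \<Theta> Q1)
              + (INF Q2\<in>?F D2. ereal (1 - t) * nonlinear_MI p \<Theta> Q2)"
    proof (rule ereal_le_INF_add)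
      fix Q1 Q2 assume Q: "Q1 \<in> ?F D1" "Q2 \<in> ?F D2"
      have "?R (t * D1 + (1 - t) * D2) \<le> nonlinear_MI p \<Theta> (\<lambda>x y. t * Q1 x y + (1 - t) * Q2 x y)"
        unfolding rate_distortion_eq_INF_feasible
        using distortion_feasible_convex_comb[OF Q assms(3,4)] by (rule INF_lower)
      also have "\<dots> \<le> ereal t * nonlinear_MI p \<Theta> Q1 + ereal (1 - t) * nonlinear_MI p \<Theta> Q2"
        using Q assms by (intro nonlinear_MI_convex) (auto simp: distortion_feasible_def)
      finally show "?R (t * D1 + (1 - t) * D2) \<le> \<dots>" .
    qed (use assms 3 in \<open>auto simp: distortion_feasible_def intro!: ereal_0_le_mult nonlinear_MI_nonneg\<close>)
    also have "\<dots> = ereal t * ?R D1 + ereal (1 - t) * ?R D2"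
      unfolding rate_distortion_eq_INF_feasible using 3 by (simp add: ereal_mult_INF)
    finally show ?thesis .
  qed
qed

theorem theorem13:
  fixes p :: "'t \<Rightarrow> 'x::finite \<Rightarrow> real"
    and \<Theta> :: "'t set"
    and d :: "'x \<Rightarrow> 'y::finite \<Rightarrow> real"
  assumes "\<Theta> \<noteq> {}"
    and "\<And>\<theta>. \<theta> \<in> \<Theta> \<Longrightarrow> is_distribution (p \<theta>)"
    and "\<And>x y. 0 \<le> d x y"
  shows "(\<forall>D1 D2. D1 \<le> D2 \<longrightarrow> rate_distortion p \<Theta> d D2 \<le> rate_distortion p \<Theta> d D1)
       \<and> (\<forall>D1 D2 (t::real). 0 \<le> D1 \<longrightarrow> 0 \<le> D2 \<longrightarrow> 0 \<le> t \<longrightarrow> t \<le> 1 \<longrightarrow>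
            rate_distortion p \<Theta> d (t * D1 + (1 - t) * D2)
              \<le> ereal t * rate_distortion p \<Theta> d D1 + ereal (1 - t) * rate_distortion p \<Theta> d D2)"
  using rate_distortion_antimono rate_distortion_convex[where p = p, OF assms(1,2)] by blast

end
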